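(* Let $P>0$ and let $\{\theta_l\}_{l=1}^\infty$ be i.i.d. $\mathrm{Uniform}(0,2\pi)$ random variables. For each integer $i\geq 0$ define $$\bar R(i):=\mathbb{E}\Big[\log\Big(1+\Big|\textstyle\sum_{l=1}^i e^{j\theta_l}\Big|^2P\Big)\Big]$$ (with the empty sum equal to $0$). Then $\bar R(i+1)>\bar R(i)$ for all $i\geq 0$, and $\lim_{i\to\infty}\bar R(i)=\infty$.
   Context: $\log$ is the logarithm in a fixed base. *)

theory Defs
  imports "HOL-Probability.Probability"
begin

definition Rbar :: "'a measure \<Rightarrow> (nat \<Rightarrow> 'a \<Rightarrow> real) \<Rightarrow> real \<Rightarrow> real \<Rightarrow> nat \<Rightarrow> real" where
  "Rbar M \<theta> b P i =
     (\<integral>\<omega>. log b (1 + (cmod (\<Sum>l=1..i. cis (\<theta> l \<omega>)))\<^sup>2 * P) \<partial>M)"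

end

theory Submission
  imports Defs "HOL-Complex_Analysis.Complex_Analysis" "HOL-Real_Asymp.Real_Asymp"
begin

(* Let S_i be the sum of the first i phasors cis theta_l. As theta_(i+1) is uniform and independent
   of S_i, E f(S_(i+1)) = E (M f)(S_i), where (M f)(s) is the mean of f over the unit circle
   around s. For f z = log (1 + |z|^2 P) one can write 1 + |s + cis t|^2 P = T |1 + w cis t|^2
   with |w| < 1 and T > 1 + |s|^2 P; since log |1 + w z| is harmonic on a neighbourhood of the
   closed unit disc, its circle mean is its value 0 at the centre, so (M f)(s) = log T > f s and
   the rates increase strictly. The same recursion gives E |S_i|^2 = i and E |S_i|^4 = 2 i^2 - i;
   integrating the quadratic minorant log (1 + i P) (x/i - x^2/(4 i^2)) of log (1 + x P) at
   x = |S_i|^2 then gives Rbar i >= log (1 + i P) / 2, which tends to infinity. *)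

abbreviation uniform_angle :: "real measure" where
  "uniform_angle \<equiv> uniform_measure lborel {0<..<2*pi}"

lemma integral_uniform_measure:
  fixes f :: "'a \<Rightarrow> real"
  assumes A: "A \<in> sets M" "emeasure M A \<noteq> 0" "emeasure M A \<noteq> \<infinity>"
    and f[measurable]: "f \<in> borel_measurable M"
  shows "(\<integral>x. f x \<partial>uniform_measure M A) = (\<integral>x\<in>A. f x \<partial>M) / measure M A"
proof -
  have "uniform_measure M A = density M (\<lambda>x. ennreal (indicator A x / measure M A))"
    unfolding uniform_measure_def
  proof (intro density_cong)
    have "0 < measure M A"
      using A by (simp add: emeasure_eq_ennreal_measure zero_less_measure_iff)
    then have "1 / ennreal (measure M A) = ennreal (1 / measure M A)"
      using divide_ennreal[of 1] by simp
    then show "AE x in M. indicator A x / emeasure M A = ennreal (indicator A x / measure M A)"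
      using A by (auto simp: emeasure_eq_ennreal_measure divide_ennreal split: split_indicator)
  qed (use A in auto)
  then have "(\<integral>x. f x \<partial>uniform_measure M A) = (\<integral>x. indicator A x / measure M A * f x \<partial>M)"
    using A by (simp add: integral_density)
  also have "\<dots> = (\<integral>x\<in>A. f x \<partial>M) / measure M A"
    by (simp add: set_lebesgue_integral_def mult.commute)
  finally show ?thesis .
qed

lemma integral_uniform_measure_Ioo:
  fixes f :: "real \<Rightarrow> real"
  assumes "a < b" and "f \<in> borel_measurable borel" and "continuous_on {a..b} f"
  shows "(\<integral>x. f x \<partial>uniform_measure lborel {a<..<b}) = integral {a..b} f / (b - a)"
proof -
  have "set_integrable lborel {a<..<b} f"
    by (rule set_integrable_subset[OF borel_integrable_atLeastAtMost'[OF assms(3)]]) auto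
  then have "(\<integral>x\<in>{a<..<b}. f x \<partial>lborel) = integral {a..b} f"
    by (simp add: set_borel_integral_eq_integral integral_open_interval_real)
  then show ?thesis
    using assms by (simp add: integral_uniform_measure)
qed

lemma integral_uniform_angle_Re_holomorphic:
  assumes hol: "g holomorphic_on S" and S: "open S" "cball 0 1 \<subseteq> S"
  shows "(\<integral>t. Re (g (cis t)) \<partial>uniform_angle) = Re (g 0)"
proof -
  have cont: "continuous_on S g"
    using hol by (rule holomorphic_on_imp_continuous_on)
  have "((\<lambda>u. g u / (u - 0)) has_contour_integral (2 * of_real pi * \<i> * g 0)) (circlepath 0 1)"
    using S by (intro Cauchy_integral_circlepath continuous_on_subset[OF cont]
                      holomorphic_on_subset[OF hol]) auto
  then have "((\<lambda>t. g (cis t) / cis t * \<i> * cis t) has_integral (2 * of_real pi * \<i> * g 0)) {0..2*pi}"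
    unfolding circlepath_def by (subst (asm) has_contour_integral_part_circlepath_iff) auto
  then have "((\<lambda>t. \<i> * g (cis t)) has_integral (2 * of_real pi * \<i> * g 0)) {0..2*pi}"
    by (rule has_integral_cong[THEN iffD1, rotated]) (simp add: cis_neq_zero)
  from has_integral_linear[OF this bounded_linear_Im]
  have "((\<lambda>t. Re (g (cis t))) has_integral 2 * pi * Re (g 0)) {0..2*pi}"
    by (simp add: o_def)
  moreover have "continuous_on UNIV (\<lambda>t. Re (g (cis t)))"
    using S by (intro continuous_intros continuous_on_compose2[OF cont]) auto
  ultimately show ?thesis
    by (simp add: integral_uniform_measure_Ioo borel_measurable_continuous_onI
                  continuous_on_subset integral_unique)
qed

lemma norm_add_sq_complex: "(cmod (x + y))\<^sup>2 = (cmod x)\<^sup>2 + (cmod y)\<^sup>2 + 2 * Re (cnj x * y)"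
  unfolding cmod_power2 by (simp add: power2_eq_square algebra_simps)

definition circle_mean :: "(complex \<Rightarrow> real) \<Rightarrow> complex \<Rightarrow> real" where
  "circle_mean f s = (\<integral>t. f (s + cis t) \<partial>uniform_angle)"

lemma circle_mean_norm_sq: "circle_mean (\<lambda>z. (cmod z)\<^sup>2) s = (cmod s)\<^sup>2 + 1"
proof -
  define g where "g z = of_real ((cmod s)\<^sup>2 + 1) + 2 * cnj s * z" for z
  have "(cmod (s + cis t))\<^sup>2 = Re (g (cis t))" for t
    by (simp add: g_def norm_add_sq_complex)
  moreover have "(\<integral>t. Re (g (cis t)) \<partial>uniform_angle) = Re (g 0)"
    by (rule integral_uniform_angle_Re_holomorphic[of _ UNIV]) (auto simp: g_def intro!: holomorphic_intros)
  ultimately show ?thesis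
    by (simp add: circle_mean_def g_def)
qed

lemma circle_mean_norm_pow4:
  "circle_mean (\<lambda>z. (cmod z) ^ 4) s = ((cmod s)\<^sup>2 + 1)\<^sup>2 + 2 * (cmod s)\<^sup>2"
proof -
  define a where "a = (cmod s)\<^sup>2"
  define g where "g z = of_real ((a + 1)\<^sup>2 + 2 * a) + 4 * of_real (a + 1) * cnj s * z + 2 * (cnj s * z)\<^sup>2" for z
  have "(cmod (s + cis t)) ^ 4 = Re (g (cis t))" for t
  proof -
    define u where "u = cnj s * cis t"
    have "(Re u)\<^sup>2 = ((cmod u)\<^sup>2 + Re (u\<^sup>2)) / 2"
      unfolding cmod_power2 by (simp add: power2_eq_square)
    then have Re_sq: "(Re u)\<^sup>2 = (a + Re (u\<^sup>2)) / 2"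
      by (simp add: u_def a_def norm_mult)
    have "(cmod (s + cis t)) ^ 4 = ((cmod (s + cis t))\<^sup>2)\<^sup>2"
      by simp
    also have "\<dots> = (a + 1 + 2 * Re u)\<^sup>2"
      by (simp add: norm_add_sq_complex a_def u_def)
    also have "\<dots> = Re (g (cis t))"
      using Re_sq by (simp add: g_def u_def power2_eq_square algebra_simps)
    finally show ?thesis .
  qed
  moreover have "(\<integral>t. Re (g (cis t)) \<partial>uniform_angle) = Re (g 0)"
    by (rule integral_uniform_angle_Re_holomorphic[of _ UNIV]) (auto simp: g_def intro!: holomorphic_intros)
  ultimately show ?thesis
    by (simp add: circle_mean_def g_def a_def)
qed

(* T and w are found by matching the constant and the first Fourier coefficient in t:
   T (1 + |w|^2) = 1 + P (|s|^2 + 1) and T w = P (cnj s); T is the larger root of the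
   resulting quadratic T^2 - (1 + P (|s|^2 + 1)) T + P^2 |s|^2 = 0. *)
lemma one_plus_norm_add_cis_sq_factor:
  fixes s :: complex and P :: real
  assumes P: "0 < P"
  obtains T w where "1 + (cmod s)\<^sup>2 * P < T" and "cmod w < 1"
    and "\<And>t. 1 + (cmod (s + cis t))\<^sup>2 * P = T * (cmod (1 + w * cis t))\<^sup>2"
proof -
  define a where "a = (cmod s)\<^sup>2"
  define A where "A = 1 + P * (a + 1)"
  define D where "D = A\<^sup>2 - 4 * P\<^sup>2 * a"
  have D: "D = (1 + P * a - P)\<^sup>2 + 4 * P"
    unfolding D_def A_def by (simp add: power2_eq_square algebra_simps)
  define T where "T = (A + sqrt D) / 2"
  have "(sqrt D)\<^sup>2 = D"
    using D P by simp
  then have T_root: "T\<^sup>2 - A * T + P\<^sup>2 * a = 0"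
    unfolding T_def D_def by (simp add: power2_eq_square field_simps)
  have "1 + P * a - P < sqrt D"
    using D P by (intro real_less_rsqrt) simp
  then have T_gt: "1 + a * P < T"
    unfolding T_def A_def by (simp add: algebra_simps)
  moreover have "0 \<le> a * P"
    using P by (simp add: a_def)
  ultimately have T0: "0 < T"
    by linarith
  have "A - 2 * (P * cmod s) = 1 + P * (cmod s - 1)\<^sup>2"
    unfolding A_def a_def by (simp add: power2_eq_square algebra_simps)
  then have "2 * (P * cmod s) < A"
    using P by (smt (verit) mult_nonneg_nonneg zero_le_power2)
  moreover have "0 \<le> sqrt D"
    using D P by simp
  ultimately have "P * cmod s < T"
    unfolding T_def by argo
  define w where "w = of_real (P / T) * cnj s"
  have "cmod w = P * cmod s / T"
    using T0 P by (simp add: w_def norm_mult norm_divide)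
  then have "cmod w < 1"
    using \<open>P * cmod s < T\<close> T0 by simp
  moreover have "1 + (cmod (s + cis t))\<^sup>2 * P = T * (cmod (1 + w * cis t))\<^sup>2" for t
  proof -
    have "(cmod (1 + w * cis t))\<^sup>2 = 1 + (cmod w)\<^sup>2 + 2 * Re (w * cis t)"
      by (simp add: norm_add_sq_complex norm_mult)
    also have "\<dots> = 1 + (P * cmod s / T)\<^sup>2 + 2 * (P / T) * Re (cnj s * cis t)"
      unfolding \<open>cmod w = P * cmod s / T\<close> by (simp add: w_def mult.assoc)
    finally have "T * (cmod (1 + w * cis t))\<^sup>2
                    = T * (1 + (P * cmod s / T)\<^sup>2 + 2 * (P / T) * Re (cnj s * cis t))"
      by simp
    also have "\<dots> = T + P\<^sup>2 * a / T + 2 * P * Re (cnj s * cis t)"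
      using T0 by (simp add: a_def power2_eq_square field_simps)
    also have "T + P\<^sup>2 * a / T = A"
      using T_root T0 by (simp add: power2_eq_square field_simps)
    finally show ?thesis
      by (simp add: A_def a_def norm_add_sq_complex algebra_simps)
  qed
  ultimately show ?thesis
    using that T_gt by (simp add: a_def)
qed

lemma circle_mean_log_gt:
  assumes b: "1 < b" and P: "0 < P"
  shows "log b (1 + (cmod s)\<^sup>2 * P) < circle_mean (\<lambda>z. log b (1 + (cmod z)\<^sup>2 * P)) s"
proof -
  obtain T w where T: "1 + (cmod s)\<^sup>2 * P < T" and w: "cmod w < 1"
    and factor: "\<And>t. 1 + (cmod (s + cis t))\<^sup>2 * P = T * (cmod (1 + w * cis t))\<^sup>2"
    using one_plus_norm_add_cis_sq_factor[OF P] by blast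
  have pos: "0 < 1 + (cmod s)\<^sup>2 * P"
    using P by (simp add: add_pos_nonneg)
  define S where "S = {z. cmod (w * z) < 1}"
  have Re_pos: "0 < Re (1 + w * z)" if "z \<in> S" for z
    using that abs_Re_le_cmod[of "w * z"] by (simp add: S_def)
  define g where "g z = of_real (log b T) + of_real (2 / ln b) * Ln (1 + w * z)" for z
  have "1 + w * z \<notin> \<real>\<^sub>\<le>\<^sub>0" if "z \<in> S" for z
    using Re_pos[OF that] by (auto simp: complex_nonpos_Reals_iff)
  then have "g holomorphic_on S"
    unfolding g_def by (intro holomorphic_intros)
  moreover have "open S"
    unfolding S_def by (intro open_Collect_less continuous_intros)
  moreover have "cball 0 1 \<subseteq> S"
    using w by (auto simp: S_def norm_mult intro: le_less_trans[OF mult_left_le])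
  ultimately have mean: "(\<integral>t. Re (g (cis t)) \<partial>uniform_angle) = Re (g 0)"
    by (rule integral_uniform_angle_Re_holomorphic)
  have "log b (1 + (cmod (s + cis t))\<^sup>2 * P) = Re (g (cis t))" for t
  proof -
    have "0 < Re (1 + w * cis t)"
      by (rule Re_pos) (use w in \<open>simp add: S_def norm_mult\<close>)
    then have "1 + w * cis t \<noteq> 0"
      by (metis zero_complex.sel(1) less_irrefl)
    have "log b (1 + (cmod (s + cis t))\<^sup>2 * P) = log b (T * (cmod (1 + w * cis t))\<^sup>2)"
      by (simp add: factor)
    also have "\<dots> = log b T + 2 * log b (cmod (1 + w * cis t))"
      using T pos \<open>1 + w * cis t \<noteq> 0\<close> by (simp add: log_mult log_nat_power)
    also have "\<dots> = Re (g (cis t))"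
      using \<open>1 + w * cis t \<noteq> 0\<close> by (simp add: g_def log_def)
    finally show ?thesis .
  qed
  then have "circle_mean (\<lambda>z. log b (1 + (cmod z)\<^sup>2 * P)) s = log b T"
    using mean by (simp add: circle_mean_def g_def)
  then show ?thesis
    using T pos b by simp
qed

lemma mult_log_one_plus_le:
  fixes b \<tau> y :: real
  assumes "1 < b" "0 \<le> \<tau>" "\<tau> \<le> 1" "-1 < y"
  shows "\<tau> * log b (1 + y) \<le> log b (1 + \<tau> * y)"
proof -
  have "(1 - \<tau>) * ln 1 + \<tau> * ln (1 + y) \<le> ln ((1 - \<tau>) *\<^sub>R 1 + \<tau> *\<^sub>R (1 + y))"
    using assms by (intro concave_onD[OF ln_concave]) auto
  then have "\<tau> * ln (1 + y) \<le> ln (1 + \<tau> * y)"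
    by (simp add: algebra_simps)
  then have "\<tau> * ln (1 + y) / ln b \<le> ln (1 + \<tau> * y) / ln b"
    using assms by (intro divide_right_mono) auto
  then show ?thesis
    by (simp add: log_def)
qed

lemma log_one_plus_ge_quadratic:
  fixes b P \<mu> x :: real
  assumes b: "1 < b" and P: "0 < P" and \<mu>: "0 < \<mu>" and x: "0 \<le> x"
  shows "log b (1 + \<mu> * P) * (x / \<mu> - x\<^sup>2 / (4 * \<mu>\<^sup>2)) \<le> log b (1 + x * P)"
proof -
  define c where "c = log b (1 + \<mu> * P)"
  have c: "0 \<le> c"
    unfolding c_def using b P \<mu> by (subst zero_le_log_cancel_iff) (auto intro: add_pos_nonneg)
  show ?thesis
  proof (cases "\<mu> \<le> x")
    case True
    have "x / \<mu> - x\<^sup>2 / (4 * \<mu>\<^sup>2) = 1 - (x / (2 * \<mu>) - 1)\<^sup>2"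
      using \<mu> by (simp add: power2_eq_square field_simps)
    then have "c * (x / \<mu> - x\<^sup>2 / (4 * \<mu>\<^sup>2)) \<le> c"
      using c by (simp add: mult_left_le)
    also have "c \<le> log b (1 + x * P)"
      using b P \<mu> True by (simp add: c_def mult_right_mono add_pos_nonneg mult.commute[of \<mu>])
    finally show ?thesis
      by (simp add: c_def)
  next
    case False
    have "c * (x / \<mu> - x\<^sup>2 / (4 * \<mu>\<^sup>2)) \<le> (x / \<mu>) * c"
      using c \<mu> by (simp add: mult_left_mono algebra_simps)
    also have "\<dots> \<le> log b (1 + (x / \<mu>) * (\<mu> * P))"
      unfolding c_def using b \<mu> x False mult_pos_pos[OF \<mu> P] by (intro mult_log_one_plus_le) auto
    finally show ?thesis
      using \<mu> by (simp add: c_def)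
  qed
qed

lemma continuous_on_log_one_plus_norm_sq:
  assumes "1 < b" and "0 < P"
  shows "continuous_on UNIV (\<lambda>z::complex. log b (1 + (cmod z)\<^sup>2 * P))"
proof -
  have "1 + (cmod z)\<^sup>2 * P \<noteq> 0" for z
    using assms by (smt (verit) mult_nonneg_nonneg zero_le_power2)
  then show ?thesis
    using assms by (intro continuous_intros) auto
qed

lemma borel_measurable_cis[measurable]: "cis \<in> borel_measurable borel"
  by (intro borel_measurable_continuous_onI continuous_intros)

lemma (in prob_space) indep_var_integral_iterated:
  fixes H :: "'b \<times> 'b \<Rightarrow> real"
  assumes indep: "indep_var N1 X N2 Y"
    and H[measurable]: "H \<in> borel_measurable (N1 \<Otimes>\<^sub>M N2)"
    and int: "integrable M (\<lambda>\<omega>. H (X \<omega>, Y \<omega>))"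
  shows "integrable M (\<lambda>\<omega>. \<integral>y. H (X \<omega>, y) \<partial>distr M N2 Y)"
    and "(\<integral>\<omega>. H (X \<omega>, Y \<omega>) \<partial>M) = (\<integral>\<omega>. (\<integral>y. H (X \<omega>, y) \<partial>distr M N2 Y) \<partial>M)"
proof -
  have X[measurable]: "X \<in> M \<rightarrow>\<^sub>M N1" and Y[measurable]: "Y \<in> M \<rightarrow>\<^sub>M N2"
    using indep by (rule indep_var_rv1, rule indep_var_rv2)
  interpret X: prob_space "distr M N1 X"
    by (rule prob_space_distr) simp
  interpret Y: prob_space "distr M N2 Y"
    by (rule prob_space_distr) simp
  interpret XY: pair_prob_space "distr M N1 X" "distr M N2 Y" ..
  have joint: "distr M N1 X \<Otimes>\<^sub>M distr M N2 Y = distr M (N1 \<Otimes>\<^sub>M N2) (\<lambda>\<omega>. (X \<omega>, Y \<omega>))"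
    using indep by (simp add: indep_var_distribution_eq)
  have intH: "integrable (distr M N1 X \<Otimes>\<^sub>M distr M N2 Y) H"
    unfolding joint using int by (subst integrable_distr_eq) auto
  show "integrable M (\<lambda>\<omega>. \<integral>y. H (X \<omega>, y) \<partial>distr M N2 Y)"
    using XY.integrable_fst'[OF intH] by (subst (asm) integrable_distr_eq) auto
  have "(\<integral>\<omega>. H (X \<omega>, Y \<omega>) \<partial>M) = integral\<^sup>L (distr M N1 X \<Otimes>\<^sub>M distr M N2 Y) H"
    unfolding joint by (subst integral_distr) auto
  also have "\<dots> = (\<integral>x. (\<integral>y. H (x, y) \<partial>distr M N2 Y) \<partial>distr M N1 X)"
    by (rule XY.integral_fst'[OF intH, symmetric])
  also have "\<dots> = (\<integral>\<omega>. (\<integral>y. H (X \<omega>, y) \<partial>distr M N2 Y) \<partial>M)"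
    by (subst integral_distr) auto
  finally show "(\<integral>\<omega>. H (X \<omega>, Y \<omega>) \<partial>M) = (\<integral>\<omega>. (\<integral>y. H (X \<omega>, y) \<partial>distr M N2 Y) \<partial>M)" .
qed

lemma (in prob_space) indep_var_sum_indep_vars:
  fixes f :: "'b \<Rightarrow> 'c::{second_countable_topology, topological_comm_monoid_add}"
  assumes indep: "indep_vars (\<lambda>_. N) X I" and J: "finite J" "J \<subseteq> I" and k: "k \<in> I - J"
    and f[measurable]: "f \<in> N \<rightarrow>\<^sub>M borel"
  shows "indep_var borel (\<lambda>\<omega>. \<Sum>j\<in>J. f (X j \<omega>)) borel (\<lambda>\<omega>. f (X k \<omega>))"
proof -
  have "(\<lambda>x. \<Sum>j\<in>J. f (x j)) \<in> PiM J (\<lambda>_. N) \<rightarrow>\<^sub>M borel"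
    by measurable
  moreover have "(\<lambda>x. f (x k)) \<in> PiM {k} (\<lambda>_. N) \<rightarrow>\<^sub>M borel"
    by measurable
  ultimately have "indep_var borel ((\<lambda>x. \<Sum>j\<in>J. f (x j)) \<circ> (\<lambda>\<omega>. restrict (\<lambda>j. X j \<omega>) J))
                     borel ((\<lambda>x. f (x k)) \<circ> (\<lambda>\<omega>. restrict (\<lambda>j. X j \<omega>) {k}))"
    using J k by (intro indep_var_compose[OF indep_var_restrict[OF indep]]) auto
  moreover have "(\<lambda>x. \<Sum>j\<in>J. f (x j)) \<circ> (\<lambda>\<omega>. restrict (\<lambda>j. X j \<omega>) J) = (\<lambda>\<omega>. \<Sum>j\<in>J. f (X j \<omega>))"
    by (auto simp: fun_eq_iff intro!: sum.cong)
  ultimately show ?thesis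
    by (simp add: o_def)
qed

locale uniform_phases = prob_space M for M :: "'a measure" +
  fixes \<theta> :: "nat \<Rightarrow> 'a \<Rightarrow> real"
  assumes indep_phases: "indep_vars (\<lambda>_. borel) \<theta> {1..}"
    and distr_phase: "\<And>l. 1 \<le> l \<Longrightarrow> distr M borel (\<theta> l) = uniform_angle"
begin

definition phasor_sum :: "nat \<Rightarrow> 'a \<Rightarrow> complex" where
  "phasor_sum i \<omega> = (\<Sum>l=1..i. cis (\<theta> l \<omega>))"

lemma measurable_phase[measurable]: "1 \<le> l \<Longrightarrow> \<theta> l \<in> borel_measurable M"
  using indep_phases by (auto simp: indep_vars_def)

lemma measurable_phasor_sum[measurable]: "phasor_sum i \<in> borel_measurable M"
  unfolding phasor_sum_def by measurable

lemma norm_phasor_sum_le: "cmod (phasor_sum i \<omega>) \<le> i"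
proof -
  have "cmod (phasor_sum i \<omega>) \<le> (\<Sum>l=1..i. cmod (cis (\<theta> l \<omega>)))"
    unfolding phasor_sum_def by (rule norm_sum)
  then show ?thesis
    by simp
qed

lemma integrable_phasor_sum:
  fixes f :: "complex \<Rightarrow> real"
  assumes f: "continuous_on UNIV f"
  shows "integrable M (\<lambda>\<omega>. f (phasor_sum i \<omega>))"
proof -
  have "bounded (f ` cball 0 i)"
    by (intro compact_imp_bounded compact_continuous_image continuous_on_subset[OF f]) auto
  then obtain B where "\<forall>z\<in>cball 0 i. \<bar>f z\<bar> \<le> B"
    by (auto simp: bounded_iff)
  moreover have "f \<in> borel_measurable borel"
    using f by (rule borel_measurable_continuous_onI)
  ultimately show ?thesis
    using norm_phasor_sum_le by (intro integrable_const_bound[where B = B]) auto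
qed

lemma integral_phasor_sum_Suc:
  fixes f :: "complex \<Rightarrow> real"
  assumes f: "continuous_on UNIV f"
  shows "integrable M (\<lambda>\<omega>. circle_mean f (phasor_sum i \<omega>))"
    and "(\<integral>\<omega>. f (phasor_sum (Suc i) \<omega>) \<partial>M) = (\<integral>\<omega>. circle_mean f (phasor_sum i \<omega>) \<partial>M)"
proof -
  have [measurable]: "f \<in> borel_measurable borel"
    using f by (rule borel_measurable_continuous_onI)
  (* indep_var requires both variables to have the same type, hence the phasor cis theta_(i+1)
     rather than the phase itself *)
  have indep: "indep_var borel (phasor_sum i) borel (\<lambda>\<omega>. cis (\<theta> (Suc i) \<omega>))"
    unfolding phasor_sum_def[abs_def]
    by (rule indep_var_sum_indep_vars[OF indep_phases]) auto
  have "distr M borel (\<lambda>\<omega>. cis (\<theta> (Suc i) \<omega>)) = distr uniform_angle borel cis"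
    using distr_distr[of cis borel borel "\<theta> (Suc i)" M] distr_phase[of "Suc i"] by (simp add: o_def)
  then have inner: "(\<integral>z. f (s + z) \<partial>distr M borel (\<lambda>\<omega>. cis (\<theta> (Suc i) \<omega>))) = circle_mean f s" for s
    by (simp add: circle_mean_def integral_distr)
  have "integrable M (\<lambda>\<omega>. f (phasor_sum (Suc i) \<omega>))"
    using f by (rule integrable_phasor_sum)
  then have int: "integrable M (\<lambda>\<omega>. (\<lambda>(s, z). f (s + z)) (phasor_sum i \<omega>, cis (\<theta> (Suc i) \<omega>)))"
    by (simp add: phasor_sum_def)
  show "integrable M (\<lambda>\<omega>. circle_mean f (phasor_sum i \<omega>))"
    using indep_var_integral_iterated(1)[OF indep _ int] by (simp add: inner)
  show "(\<integral>\<omega>. f (phasor_sum (Suc i) \<omega>) \<partial>M) = (\<integral>\<omega>. circle_mean f (phasor_sum i \<omega>) \<partial>M)"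
    using indep_var_integral_iterated(2)[OF indep _ int] by (simp add: inner phasor_sum_def)
qed

lemma integral_norm_phasor_sum_sq: "(\<integral>\<omega>. (cmod (phasor_sum i \<omega>))\<^sup>2 \<partial>M) = i"
proof (induction i)
  case 0
  then show ?case
    by (simp add: phasor_sum_def)
next
  case (Suc i)
  have cont: "continuous_on UNIV (\<lambda>z::complex. (cmod z)\<^sup>2)"
    by (intro continuous_intros)
  have "(\<integral>\<omega>. (cmod (phasor_sum (Suc i) \<omega>))\<^sup>2 \<partial>M) = (\<integral>\<omega>. (cmod (phasor_sum i \<omega>))\<^sup>2 + 1 \<partial>M)"
    by (simp add: integral_phasor_sum_Suc(2)[OF cont] circle_mean_norm_sq)
  also have "\<dots> = i + 1"
    using integrable_phasor_sum[OF cont] Suc.IH by (simp add: prob_space)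
  finally show ?case
    by simp
qed

lemma integral_norm_phasor_sum_pow4: "(\<integral>\<omega>. (cmod (phasor_sum i \<omega>)) ^ 4 \<partial>M) = 2 * (real i)\<^sup>2 - i"
proof (induction i)
  case 0
  then show ?case
    by (simp add: phasor_sum_def)
next
  case (Suc i)
  have cont2: "continuous_on UNIV (\<lambda>z::complex. (cmod z)\<^sup>2)"
    and cont4: "continuous_on UNIV (\<lambda>z::complex. (cmod z) ^ 4)"
    by (intro continuous_intros)+
  have "(\<integral>\<omega>. (cmod (phasor_sum (Suc i) \<omega>)) ^ 4 \<partial>M)
          = (\<integral>\<omega>. (cmod (phasor_sum i \<omega>)) ^ 4 + (4 * (cmod (phasor_sum i \<omega>))\<^sup>2 + 1) \<partial>M)"
    unfolding integral_phasor_sum_Suc(2)[OF cont4] circle_mean_norm_pow4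
    by (simp add: power2_eq_square power4_eq_xxxx algebra_simps)
  also have "\<dots> = (2 * (real i)\<^sup>2 - i) + (4 * i + 1)"
    using integrable_phasor_sum[OF cont2] integrable_phasor_sum[OF cont4]
    by (simp add: prob_space Suc.IH integral_norm_phasor_sum_sq)
  finally show ?case
    by (simp add: power2_eq_square algebra_simps)
qed

lemma integral_log_phasor_sum_less_Suc:
  assumes b: "1 < b" and P: "0 < P"
  shows "(\<integral>\<omega>. log b (1 + (cmod (phasor_sum i \<omega>))\<^sup>2 * P) \<partial>M)
           < (\<integral>\<omega>. log b (1 + (cmod (phasor_sum (Suc i) \<omega>))\<^sup>2 * P) \<partial>M)"
proof -
  define F where "F z = log b (1 + (cmod z)\<^sup>2 * P)" for z
  have cont: "continuous_on UNIV F"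
    unfolding F_def using b P by (rule continuous_on_log_one_plus_norm_sq)
  have "F s < circle_mean F s" for s
    unfolding F_def using circle_mean_log_gt[OF b P] .
  then have "(\<integral>\<omega>. F (phasor_sum i \<omega>) \<partial>M) < (\<integral>\<omega>. circle_mean F (phasor_sum i \<omega>) \<partial>M)"
    by (intro integral_less_AE_space integrable_phasor_sum[OF cont] integral_phasor_sum_Suc(1)[OF cont])
       (auto simp: emeasure_space_1)
  also have "\<dots> = (\<integral>\<omega>. F (phasor_sum (Suc i) \<omega>) \<partial>M)"
    by (rule integral_phasor_sum_Suc(2)[OF cont, symmetric])
  finally show ?thesis
    unfolding F_def .
qed

lemma integral_log_phasor_sum_ge:
  assumes b: "1 < b" and P: "0 < P" and i: "1 \<le> i"
  shows "log b (1 + i * P) / 2 \<le> (\<integral>\<omega>. log b (1 + (cmod (phasor_sum i \<omega>))\<^sup>2 * P) \<partial>M)"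
proof -
  define c where "c = log b (1 + i * P)"
  define Z where "Z \<omega> = (cmod (phasor_sum i \<omega>))\<^sup>2" for \<omega>
  have c: "0 \<le> c"
    unfolding c_def using b P by (subst zero_le_log_cancel_iff) (auto intro: add_pos_nonneg)
  have int: "integrable M Z" "integrable M (\<lambda>\<omega>. (Z \<omega>)\<^sup>2)"
    unfolding Z_def by (auto intro!: integrable_phasor_sum continuous_intros simp flip: power_mult)
  have int_log: "integrable M (\<lambda>\<omega>. log b (1 + Z \<omega> * P))"
    unfolding Z_def using b P by (intro integrable_phasor_sum continuous_on_log_one_plus_norm_sq)
  have moments: "(\<integral>\<omega>. Z \<omega> \<partial>M) = i" "(\<integral>\<omega>. (Z \<omega>)\<^sup>2 \<partial>M) = 2 * (real i)\<^sup>2 - i"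
    unfolding Z_def by (simp_all add: integral_norm_phasor_sum_sq flip: integral_norm_phasor_sum_pow4 power_mult)
  have "c / 2 \<le> c * (1 / 2 + 1 / (4 * i))"
    using c by (simp add: distrib_left)
  also have "\<dots> = c * (i / i - (2 * (real i)\<^sup>2 - i) / (4 * (real i)\<^sup>2))"
    using i by (simp add: power2_eq_square field_simps)
  also have "\<dots> = (\<integral>\<omega>. c * (Z \<omega> / i - (Z \<omega>)\<^sup>2 / (4 * (real i)\<^sup>2)) \<partial>M)"
    using int by (simp add: moments)
  also have "\<dots> \<le> (\<integral>\<omega>. log b (1 + Z \<omega> * P) \<partial>M)"
  proof (rule integral_mono[OF _ int_log])
    show "integrable M (\<lambda>\<omega>. c * (Z \<omega> / i - (Z \<omega>)\<^sup>2 / (4 * (real i)\<^sup>2)))"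
      using int by auto
    show "c * (Z \<omega> / i - (Z \<omega>)\<^sup>2 / (4 * (real i)\<^sup>2)) \<le> log b (1 + Z \<omega> * P)" for \<omega>
      unfolding c_def using b P i by (intro log_one_plus_ge_quadratic) (auto simp: Z_def)
  qed
  finally show ?thesis
    by (simp add: c_def Z_def)
qed

lemma Rbar_eq_integral_phasor_sum:
  "Rbar M \<theta> b P i = (\<integral>\<omega>. log b (1 + (cmod (phasor_sum i \<omega>))\<^sup>2 * P) \<partial>M)"
  by (simp add: Rbar_def phasor_sum_def)

end

theorem proposition3:
  fixes M :: "'a measure" and \<theta> :: "nat \<Rightarrow> 'a \<Rightarrow> real" and b P :: real
  assumes "prob_space M"
    and "b > 1"
    and "P > 0"
    and "prob_space.indep_vars M (\<lambda>_. borel) \<theta> {1..}"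
    and "\<And>l. l \<ge> 1 \<Longrightarrow> distr M borel (\<theta> l) = uniform_measure lborel {0<..<2*pi}"
  shows "(\<forall>i. Rbar M \<theta> b P (Suc i) > Rbar M \<theta> b P i) \<and> filterlim (Rbar M \<theta> b P) at_top sequentially"
proof -
  interpret uniform_phases M \<theta>
    using assms(1,4,5) by (simp add: uniform_phases_def uniform_phases_axioms_def)
  have "\<forall>i. Rbar M \<theta> b P i < Rbar M \<theta> b P (Suc i)"
    using assms(2,3) by (simp add: Rbar_eq_integral_phasor_sum integral_log_phasor_sum_less_Suc)
  moreover have lim: "filterlim (\<lambda>i::nat. log b (1 + i * P) / 2) at_top sequentially"
    using assms(2,3) by real_asymp
  have lower: "log b (1 + i * P) / 2 \<le> Rbar M \<theta> b P i" if "1 \<le> i" for i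
    unfolding Rbar_eq_integral_phasor_sum using assms(2,3) that by (rule integral_log_phasor_sum_ge)
  have "filterlim (Rbar M \<theta> b P) at_top sequentially"
    by (rule filterlim_at_top_mono[OF lim eventually_sequentiallyI[OF lower]])
  ultimately show ?thesis
    by simp
qed

end
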